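(* Let $V\in BC^\infty(\mathbb{R}^2;\mathbb{R})$, $\mathcal{A}\in BC^\infty(\mathbb{R}^2;\mathbb{R}^2)$, $b\in\mathbb{R}$, $A(\mathbf{x})=(-x_2,0)$, $H_b=(-\mathrm{i}\nabla-\mathcal{A}-bA)^2+V$ on $L^2(\mathbb{R}^2)$ (closure from $C_c^\infty(\mathbb{R}^2)$), $E=\{x_2>0\}$, and let $H_b^E$ be the closure in $L^2(E)$ of $H_b$ restricted to $C_c^\infty(\bar E)$. Let $\ell>2$ and let $\tilde\eta_\ell:E\to[0,1]$ be a smooth function depending only on $x_2$, with $\operatorname{supp}\tilde\eta_\ell\subset\{\mathbf{x}\in E: x_2>\sqrt\ell/4\}$ and $\|\partial_2^n\tilde\eta_\ell\|_\infty\lesssim \ell^{-n/2}$ for $n\ge1$. Then multiplication by $\tilde\eta_\ell$ maps $D(H_b)$ into $D(H_b^E)$, and for every $\psi\in D(H_b)$, $$H_b^E\,\tilde\eta_\ell\psi=H_b\,\tilde\eta_\ell\psi.$$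
   Context: $BC^\infty$ denotes smooth functions with all derivatives bounded. $C_c^\infty(\bar E)$ is the set of smooth functions on $E$ whose partial derivatives all extend continuously to $\bar E$ and which vanish outside $(-a,a)\times(0,a)$ for some $a>0$. Functions on $E$ are identified with functions on $\mathbb{R}^2$ vanishing outside $E$ (and $\tilde\eta_\ell$ is extended by $0$ to $\mathbb{R}^2$). In the paper $\tilde\eta_\ell$ is additionally part of a pair of cut-off functions adapted to a partition of unity near/far from the boundary; only the listed properties enter the statement. *)

theory Defs
  imports "HOL-Analysis.Analysis"
begin

text \<open>Points of the plane are pairs (x1, x2). Coordinate directions are indexed by
  0 (x1) and 1 (x2).\<close>

definition coord_dir :: "nat \<Rightarrow> real \<times> real" where
  "coord_dir i = (if i = 0 then (1, 0) else (0, 1))"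

definition partial :: "nat \<Rightarrow> (real \<times> real \<Rightarrow> 'a::real_normed_vector) \<Rightarrow> real \<times> real \<Rightarrow> 'a" where
  "partial i f x = vector_derivative (\<lambda>t. f (x + t *\<^sub>R coord_dir i)) (at 0)"

fun dpar :: "nat list \<Rightarrow> (real \<times> real \<Rightarrow> 'a::real_normed_vector) \<Rightarrow> real \<times> real \<Rightarrow> 'a" where
  "dpar [] f = f"
| "dpar (i # ds) f = partial i (dpar ds f)"

definition smooth_on :: "(real \<times> real) set \<Rightarrow> (real \<times> real \<Rightarrow> 'a::real_normed_vector) \<Rightarrow> bool" where
  "smooth_on S f \<longleftrightarrow> (\<forall>ds. continuous_on S (dpar ds f) \<and>
     (\<forall>i\<in>{0,1}. \<forall>x\<in>S. (\<lambda>t. dpar ds f (x + t *\<^sub>R coord_dir i)) differentiable (at 0)))"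

definition BC_inf :: "(real \<times> real \<Rightarrow> real) \<Rightarrow> bool" where
  "BC_inf f \<longleftrightarrow> smooth_on UNIV f \<and> (\<forall>ds. bounded (range (dpar ds f)))"

definition E_half :: "(real \<times> real) set" where
  "E_half = {x. snd x > 0}"

definition Cc_plane :: "(real \<times> real \<Rightarrow> complex) \<Rightarrow> bool" where
  "Cc_plane \<phi> \<longleftrightarrow> smooth_on UNIV \<phi> \<and> (\<exists>R. \<forall>x. norm x > R \<longrightarrow> \<phi> x = 0)"

text \<open>C_c^infinity(closure E), functions identified with functions on R^2 vanishing outside E.\<close>
definition Cc_Ebar :: "(real \<times> real \<Rightarrow> complex) \<Rightarrow> bool" where
  "Cc_Ebar \<phi> \<longleftrightarrow> (\<forall>x. x \<notin> E_half \<longrightarrow> \<phi> x = 0) \<and> smooth_on E_half \<phi> \<and>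
     (\<forall>ds. \<exists>g. continuous_on (closure E_half) g \<and> (\<forall>x\<in>E_half. g x = dpar ds \<phi> x)) \<and>
     (\<exists>a>0. \<forall>x. \<not> (- a < fst x \<and> fst x < a \<and> 0 < snd x \<and> snd x < a) \<longrightarrow> \<phi> x = 0)"

definition L2 :: "(real \<times> real \<Rightarrow> complex) \<Rightarrow> bool" where
  "L2 f \<longleftrightarrow> f \<in> borel_measurable lborel \<and> integrable lborel (\<lambda>x. (cmod (f x))\<^sup>2)"

definition L2_conv :: "(nat \<Rightarrow> real \<times> real \<Rightarrow> complex) \<Rightarrow> (real \<times> real \<Rightarrow> complex) \<Rightarrow> bool" where
  "L2_conv \<phi> \<psi> \<longleftrightarrow> ((\<lambda>n. \<integral>\<^sup>+ x. ennreal ((cmod (\<phi> n x - \<psi> x))\<^sup>2) \<partial>lborel) \<longlonglongrightarrow> 0)"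

text \<open>Graph of the closure of an operator T defined on the core D:
  (psi, f) lies in the graph iff there are phi_n in D with phi_n \<rightarrow> psi and T phi_n \<rightarrow> f in L^2.\<close>
definition closure_graph ::
  "((real \<times> real \<Rightarrow> complex) \<Rightarrow> bool) \<Rightarrow> ((real \<times> real \<Rightarrow> complex) \<Rightarrow> (real \<times> real \<Rightarrow> complex))
    \<Rightarrow> (real \<times> real \<Rightarrow> complex) \<Rightarrow> (real \<times> real \<Rightarrow> complex) \<Rightarrow> bool" where
  "closure_graph D T \<psi> f \<longleftrightarrow> L2 \<psi> \<and> L2 f \<and>
     (\<exists>\<phi>. (\<forall>n. D (\<phi> n)) \<and> L2_conv \<phi> \<psi> \<and> L2_conv (\<lambda>n. T (\<phi> n)) f)"

text \<open>Total magnetic potential  \<A> + b A  with A(x) = (-x2, 0); component j.\<close>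
definition mag_pot :: "(real \<times> real \<Rightarrow> real) \<Rightarrow> (real \<times> real \<Rightarrow> real) \<Rightarrow> real \<Rightarrow> nat \<Rightarrow> real \<times> real \<Rightarrow> real" where
  "mag_pot a1 a2 b j x = (if j = 0 then a1 x - b * snd x else a2 x)"

definition Pcomp :: "(real \<times> real \<Rightarrow> real) \<Rightarrow> (real \<times> real \<Rightarrow> real) \<Rightarrow> real \<Rightarrow> nat
    \<Rightarrow> (real \<times> real \<Rightarrow> complex) \<Rightarrow> real \<times> real \<Rightarrow> complex" where
  "Pcomp a1 a2 b j \<phi> x = - \<i> * partial j \<phi> x - complex_of_real (mag_pot a1 a2 b j x) * \<phi> x"

definition Hop :: "(real \<times> real \<Rightarrow> real) \<Rightarrow> (real \<times> real \<Rightarrow> real) \<Rightarrow> (real \<times> real \<Rightarrow> real) \<Rightarrow> real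
    \<Rightarrow> (real \<times> real \<Rightarrow> complex) \<Rightarrow> real \<times> real \<Rightarrow> complex" where
  "Hop V a1 a2 b \<phi> x = Pcomp a1 a2 b 0 (Pcomp a1 a2 b 0 \<phi>) x
       + Pcomp a1 a2 b 1 (Pcomp a1 a2 b 1 \<phi>) x + complex_of_real (V x) * \<phi> x"

definition HopE :: "(real \<times> real \<Rightarrow> real) \<Rightarrow> (real \<times> real \<Rightarrow> real) \<Rightarrow> (real \<times> real \<Rightarrow> real) \<Rightarrow> real
    \<Rightarrow> (real \<times> real \<Rightarrow> complex) \<Rightarrow> real \<times> real \<Rightarrow> complex" where
  "HopE V a1 a2 b \<phi> x = (if x \<in> E_half then Hop V a1 a2 b \<phi> x else 0)"

definition Hb_graph where
  "Hb_graph V a1 a2 b = closure_graph Cc_plane (Hop V a1 a2 b)"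

definition HbE_graph where
  "HbE_graph V a1 a2 b = closure_graph Cc_Ebar (HopE V a1 a2 b)"

end

theory Submission
  imports Defs
begin

(*
  Approximate psi in the graph norm of H_b by phi_n in C_c^infinity(R^2) and cut off. Since eta
  vanishes near the boundary of E, every eta phi_n lies in C_c^infinity(closure E), where H_b^E
  acts as H_b. As eta depends on x2 only, with P_2 = -i d_2 - (A + bA)_2,
    H_b (eta f) = eta H_b f - 2 i eta' P_2 f - eta'' f,
  and integration by parts gives ||P_2 f||^2 <= Re <H_b f, f> + ||V||_inf ||f||^2. So the L^2 norm
  of H_b (eta f) is controlled by the graph norm of f, and H_b (eta phi_n) is Cauchy in L^2. By
  completeness a subsequence converges to some F, and (eta psi, F) lies in the graphs of both
  closures.
*)

section \<open>Partial derivatives and smooth functions on the plane\<close>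

definition partially_differentiable :: "(real \<times> real \<Rightarrow> 'a::real_normed_vector) \<Rightarrow> bool" where
  "partially_differentiable f \<longleftrightarrow> (\<forall>i x. (\<lambda>t. f (x + t *\<^sub>R coord_dir i)) differentiable (at 0))"

definition cont_partially_differentiable :: "(real \<times> real \<Rightarrow> 'a::real_normed_vector) \<Rightarrow> bool" where
  "cont_partially_differentiable f \<longleftrightarrow> continuous_on UNIV f \<and> partially_differentiable f"

abbreviation smooth :: "(real \<times> real \<Rightarrow> 'a::real_normed_vector) \<Rightarrow> bool" where
  "smooth f \<equiv> smooth_on UNIV f"

lemma coord_dir_cases: "coord_dir i = coord_dir 0 \<or> coord_dir i = coord_dir 1"
  by (simp add: coord_dir_def)

lemma smooth_iff_dpar: "smooth f \<longleftrightarrow> (\<forall>ds. cont_partially_differentiable (dpar ds f))"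
proof -
  have *: "(\<forall>i\<in>{0,1}. \<forall>x. P (coord_dir i) x) \<longleftrightarrow> (\<forall>i x. P (coord_dir i) x)"
    for P :: "_ \<Rightarrow> _ \<Rightarrow> bool"
  proof
    assume "\<forall>i\<in>{0,1}. \<forall>x. P (coord_dir i) x"
    then show "\<forall>i x. P (coord_dir i) x" using coord_dir_cases by (metis insertCI)
  qed auto
  show ?thesis
    unfolding smooth_on_def cont_partially_differentiable_def partially_differentiable_def
    using *[of "\<lambda>v x. (\<lambda>t. dpar _ f (x + t *\<^sub>R v)) differentiable (at 0)"] by simp
qed

lemma dpar_append: "dpar (ds @ es) f = dpar ds (dpar es f)"
  by (induction ds) auto

lemma has_vector_derivative_partial:
  assumes "partially_differentiable f"
  shows "((\<lambda>t. f (x + t *\<^sub>R coord_dir i)) has_vector_derivative partial i f x) (at 0)"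
proof -
  have "(\<lambda>t. f (x + t *\<^sub>R coord_dir i)) differentiable (at 0)"
    using assms unfolding partially_differentiable_def by blast
  then show ?thesis unfolding partial_def by (simp add: vector_derivative_works)
qed

lemma partial_eqI:
  assumes "((\<lambda>t. f (x + t *\<^sub>R coord_dir i)) has_vector_derivative D) (at 0)"
  shows "partial i f x = D"
  using assms unfolding partial_def by (rule vector_derivative_at)

lemma partial_const [simp]: "partial i (\<lambda>x. c) = (\<lambda>x. 0)"
  by (rule ext, rule partial_eqI) (rule has_vector_derivative_const)

lemma partial_cong_open:
  assumes "open U" "x \<in> U" "\<And>y. y \<in> U \<Longrightarrow> f y = g y"
  shows "partial i f x = partial i g x"
proof -
  have "open ((\<lambda>t::real. x + t *\<^sub>R coord_dir i) -` U)"
    by (rule open_vimage[OF assms(1)]) (auto intro!: continuous_intros)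
  then have "eventually (\<lambda>t. t \<in> (\<lambda>t::real. x + t *\<^sub>R coord_dir i) -` U) (nhds 0)"
    by (rule eventually_nhds_in_open) (simp add: assms(2))
  then have "eventually (\<lambda>t. t \<in> UNIV \<longrightarrow>
      f (x + t *\<^sub>R coord_dir i) = g (x + t *\<^sub>R coord_dir i)) (nhds 0)"
    by (rule eventually_mono) (simp add: assms(3))
  then show ?thesis unfolding partial_def by (rule vector_derivative_cong_eq) auto
qed

lemma dpar_cong_open:
  assumes "open U" "x \<in> U" "\<And>y. y \<in> U \<Longrightarrow> f y = g y"
  shows "dpar ds f x = dpar ds g x"
  using assms(2)
proof (induction ds arbitrary: x)
  case (Cons i ds)
  show ?case by simp (rule partial_cong_open[OF assms(1) Cons.prems Cons.IH])
qed (simp add: assms(3))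

lemma dpar_eq_0_open:
  assumes "open U" "x \<in> U" "\<And>y. y \<in> U \<Longrightarrow> f y = 0"
  shows "dpar ds f x = 0"
proof -
  have "dpar ds f x = dpar ds (\<lambda>_. 0) x" by (rule dpar_cong_open) (use assms in auto)
  also have "dpar ds (\<lambda>_. 0::'a) = (\<lambda>_. 0)" by (induction ds) simp_all
  finally show ?thesis by simp
qed

lemma partial_eq_0_open:
  assumes "open U" "x \<in> U" "\<And>y. y \<in> U \<Longrightarrow> f y = 0"
  shows "partial i f x = 0"
  using dpar_eq_0_open[OF assms, where ds = "[i]"] by simp

lemma partial_add:
  assumes "partially_differentiable f" "partially_differentiable g"
  shows "partial i (\<lambda>x. f x + g x) = (\<lambda>x. partial i f x + partial i g x)"
  by (rule ext, rule partial_eqI, rule has_vector_derivative_add)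
     (use has_vector_derivative_partial assms in auto)

lemma partial_diff:
  assumes "partially_differentiable f" "partially_differentiable g"
  shows "partial i (\<lambda>x. f x - g x) = (\<lambda>x. partial i f x - partial i g x)"
  by (rule ext, rule partial_eqI, rule has_vector_derivative_diff)
     (use has_vector_derivative_partial assms in auto)

lemma partial_mult:
  fixes f g :: "real \<times> real \<Rightarrow> 'a::real_normed_algebra"
  assumes "partially_differentiable f" "partially_differentiable g"
  shows "partial i (\<lambda>x. f x * g x) = (\<lambda>x. f x * partial i g x + partial i f x * g x)"
  by (rule ext, rule partial_eqI)
     (use has_vector_derivative_mult[OF has_vector_derivative_partial[OF assms(1)]
       has_vector_derivative_partial[OF assms(2)]] in simp)

lemma partial_of_real:
  fixes f :: "real \<times> real \<Rightarrow> real"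
  assumes "partially_differentiable f"
  shows "partial i (\<lambda>x. (of_real (f x) :: 'a::real_normed_algebra_1)) = (\<lambda>x. of_real (partial i f x))"
  by (rule ext, rule partial_eqI, rule has_vector_derivative_of_real)
     (use has_vector_derivative_partial[OF assms]
      in \<open>simp add: has_real_derivative_iff_has_vector_derivative\<close>)

lemma cont_partially_differentiable_add:
  "cont_partially_differentiable f \<Longrightarrow> cont_partially_differentiable g \<Longrightarrow>
    cont_partially_differentiable (\<lambda>x. f x + g x)"
  unfolding cont_partially_differentiable_def partially_differentiable_def
  by (auto intro: continuous_intros differentiable_compose)

lemma cont_partially_differentiable_diff:
  "cont_partially_differentiable f \<Longrightarrow> cont_partially_differentiable g \<Longrightarrow>
    cont_partially_differentiable (\<lambda>x. f x - g x)"
  unfolding cont_partially_differentiable_def partially_differentiable_def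
  by (auto intro: continuous_intros differentiable_compose)

lemma cont_partially_differentiable_mult:
  "cont_partially_differentiable f \<Longrightarrow> cont_partially_differentiable g \<Longrightarrow>
    cont_partially_differentiable (\<lambda>x. f x * (g x :: 'a::real_normed_algebra))"
  unfolding cont_partially_differentiable_def partially_differentiable_def
  by (auto intro: continuous_intros differentiable_compose)

lemma cont_partially_differentiable_of_real:
  "cont_partially_differentiable f \<Longrightarrow>
    cont_partially_differentiable (\<lambda>x. (of_real (f x) :: 'a::real_normed_algebra_1))"
  unfolding cont_partially_differentiable_def partially_differentiable_def
  by (auto intro: continuous_intros differentiable_compose)

lemma cont_partially_differentiable_const: "cont_partially_differentiable (\<lambda>x. c)"
  unfolding cont_partially_differentiable_def partially_differentiable_def by auto

lemma cont_partially_differentiableD: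
  "cont_partially_differentiable f \<Longrightarrow> partially_differentiable f"
  unfolding cont_partially_differentiable_def by blast

text \<open>Smoothness described by induction on the order, so that closure under products can be
  proved by induction.\<close>

fun smooth_upto :: "nat \<Rightarrow> (real \<times> real \<Rightarrow> 'a::real_normed_vector) \<Rightarrow> bool" where
  "smooth_upto 0 f \<longleftrightarrow> cont_partially_differentiable f"
| "smooth_upto (Suc n) f \<longleftrightarrow> cont_partially_differentiable f \<and> (\<forall>j. smooth_upto n (partial j f))"

lemma smooth_upto_imp_cont_partially_differentiable: "smooth_upto n f \<Longrightarrow> cont_partially_differentiable f"
  by (cases n) auto

lemma smooth_upto_Suc_imp: "smooth_upto (Suc n) f \<Longrightarrow> smooth_upto n f"
  by (induction n arbitrary: f) auto

lemma smooth_iff_smooth_upto: "smooth f \<longleftrightarrow> (\<forall>n. smooth_upto n f)"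
proof
  assume "smooth f"
  then have "\<forall>ds. cont_partially_differentiable (dpar ds f)" by (simp add: smooth_iff_dpar)
  moreover have "smooth_upto n g" if "\<forall>ds. cont_partially_differentiable (dpar ds g)"
    for n and g :: "real \<times> real \<Rightarrow> 'a"
    using that
  proof (induction n arbitrary: g)
    case 0
    then show ?case by (metis smooth_upto.simps(1) dpar.simps(1))
  next
    case (Suc n)
    have "\<forall>ds. cont_partially_differentiable (dpar ds (partial j g))" for j
      using Suc.prems by (metis dpar_append dpar.simps(1) dpar.simps(2))
    then show ?case using Suc by (metis smooth_upto.simps(2) dpar.simps(1))
  qed
  ultimately show "\<forall>n. smooth_upto n f" by blast
next
  assume "\<forall>n. smooth_upto n f"
  moreover have "\<forall>g. (\<forall>n. smooth_upto n g) \<longrightarrow> cont_partially_differentiable (dpar ds (g :: _ \<Rightarrow> 'a))"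
    for ds
  proof (induction ds rule: rev_induct)
    case Nil
    then show ?case using smooth_upto_imp_cont_partially_differentiable by auto
  next
    case (snoc j ds)
    then show ?case by (metis smooth_upto.simps(2) dpar_append dpar.simps)
  qed
  ultimately show "smooth f" by (simp add: smooth_iff_dpar)
qed

lemma smooth_imp_continuous: "smooth f \<Longrightarrow> continuous_on UNIV f"
  and smooth_imp_partially_differentiable: "smooth f \<Longrightarrow> partially_differentiable f"
  using smooth_iff_smooth_upto smooth_upto_imp_cont_partially_differentiable
  unfolding cont_partially_differentiable_def by blast+

lemma smooth_imp_borel_measurable: "smooth f \<Longrightarrow> f \<in> borel_measurable lborel"
  by (simp add: borel_measurable_continuous_onI smooth_imp_continuous)

lemma smooth_partial: "smooth f \<Longrightarrow> smooth (partial j f)"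
  by (metis smooth_upto.simps(2) smooth_iff_smooth_upto)

lemma smooth_dpar: "smooth f \<Longrightarrow> smooth (dpar ds f)"
  by (induction ds) (auto intro: smooth_partial)

lemma smooth_upto_add: "smooth_upto n f \<Longrightarrow> smooth_upto n g \<Longrightarrow> smooth_upto n (\<lambda>x. f x + g x)"
  by (induction n arbitrary: f g)
     (simp_all add: cont_partially_differentiable_add partial_add cont_partially_differentiableD)

lemma smooth_upto_diff: "smooth_upto n f \<Longrightarrow> smooth_upto n g \<Longrightarrow> smooth_upto n (\<lambda>x. f x - g x)"
  by (induction n arbitrary: f g)
     (simp_all add: cont_partially_differentiable_diff partial_diff cont_partially_differentiableD)

lemma smooth_upto_const: "smooth_upto n (\<lambda>x. c)"
  by (induction n arbitrary: c) (simp_all add: cont_partially_differentiable_const)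

lemma smooth_upto_mult:
  "smooth_upto n f \<Longrightarrow> smooth_upto n g \<Longrightarrow> smooth_upto n (\<lambda>x. f x * (g x :: 'a::real_normed_algebra))"
proof (induction n arbitrary: f g)
  case 0
  then show ?case by (simp add: cont_partially_differentiable_mult)
next
  case (Suc n)
  have "smooth_upto n (\<lambda>x. f x * partial j g x + partial j f x * g x)" for j
    by (intro smooth_upto_add Suc.IH) (use Suc.prems smooth_upto_Suc_imp in auto)
  then show ?case
    using Suc.prems
    by (simp add: cont_partially_differentiable_mult partial_mult cont_partially_differentiableD)
qed

lemma smooth_upto_of_real:
  "smooth_upto n f \<Longrightarrow> smooth_upto n (\<lambda>x. (of_real (f x) :: 'a::real_normed_algebra_1))"
  by (induction n arbitrary: f)
     (simp_all add: cont_partially_differentiable_of_real partial_of_real cont_partially_differentiableD)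

lemma smooth_add: "smooth f \<Longrightarrow> smooth g \<Longrightarrow> smooth (\<lambda>x. f x + g x)"
  by (simp add: smooth_iff_smooth_upto smooth_upto_add)

lemma smooth_diff: "smooth f \<Longrightarrow> smooth g \<Longrightarrow> smooth (\<lambda>x. f x - g x)"
  by (simp add: smooth_iff_smooth_upto smooth_upto_diff)

lemma smooth_mult: "smooth f \<Longrightarrow> smooth g \<Longrightarrow> smooth (\<lambda>x. f x * (g x :: 'a::real_normed_algebra))"
  by (simp add: smooth_iff_smooth_upto smooth_upto_mult)

lemma smooth_const: "smooth (\<lambda>x. c)"
  by (simp add: smooth_iff_smooth_upto smooth_upto_const)

lemma smooth_of_real: "smooth f \<Longrightarrow> smooth (\<lambda>x. (of_real (f x) :: 'a::real_normed_algebra_1))"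
  by (simp add: smooth_iff_smooth_upto smooth_upto_of_real)

lemma smooth_snd: "smooth (snd :: real \<times> real \<Rightarrow> real)"
proof -
  have "partial j snd = (\<lambda>x::real \<times> real. snd (coord_dir j))" for j
  proof (rule ext, rule partial_eqI)
    fix x :: "real \<times> real"
    have "((\<lambda>t. snd x + t * snd (coord_dir j)) has_real_derivative snd (coord_dir j)) (at 0)"
      by (auto intro!: derivative_eq_intros)
    then show "((\<lambda>t. snd (x + t *\<^sub>R coord_dir j)) has_vector_derivative snd (coord_dir j)) (at 0)"
      by (simp add: has_real_derivative_iff_has_vector_derivative)
  qed
  moreover have "cont_partially_differentiable (snd :: real \<times> real \<Rightarrow> real)"
    unfolding cont_partially_differentiable_def partially_differentiable_def
    by (auto intro!: continuous_intros derivative_intros)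
  ultimately have "smooth_upto n (snd :: real \<times> real \<Rightarrow> real)" for n
    by (cases n) (auto simp: smooth_upto_const)
  then show ?thesis by (simp add: smooth_iff_smooth_upto)
qed

section \<open>The magnetic Schroedinger operator\<close>

lemma smooth_mag_pot:
  assumes "smooth a1" "smooth a2"
  shows "smooth (mag_pot a1 a2 b j)"
proof -
  have "mag_pot a1 a2 b j = (if j = 0 then (\<lambda>x. a1 x - b * snd x) else a2)"
    by (auto simp: fun_eq_iff mag_pot_def)
  then show ?thesis using assms by (auto intro!: smooth_diff smooth_mult smooth_const smooth_snd)
qed

lemma smooth_Pcomp: "smooth a1 \<Longrightarrow> smooth a2 \<Longrightarrow> smooth f \<Longrightarrow> smooth (Pcomp a1 a2 b j f)"
  unfolding Pcomp_def[abs_def]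
  by (intro smooth_diff smooth_mult smooth_const smooth_of_real smooth_partial smooth_mag_pot)

lemma smooth_Hop:
  "smooth V \<Longrightarrow> smooth a1 \<Longrightarrow> smooth a2 \<Longrightarrow> smooth f \<Longrightarrow> smooth (Hop V a1 a2 b f)"
  unfolding Hop_def[abs_def] by (intro smooth_add smooth_mult smooth_of_real smooth_Pcomp)

lemma Pcomp_diff:
  "partially_differentiable f \<Longrightarrow> partially_differentiable g \<Longrightarrow>
    Pcomp a1 a2 b j (\<lambda>x. f x - g x) = (\<lambda>x. Pcomp a1 a2 b j f x - Pcomp a1 a2 b j g x)"
  unfolding Pcomp_def[abs_def] by (simp add: partial_diff algebra_simps)

lemma Pcomp_cmult:
  "partially_differentiable f \<Longrightarrow>
    Pcomp a1 a2 b j (\<lambda>x. c * f x) = (\<lambda>x. c * Pcomp a1 a2 b j f x)"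
  unfolding Pcomp_def[abs_def]
  by (simp add: partial_mult cont_partially_differentiableD[OF cont_partially_differentiable_const]
      algebra_simps)

lemma Pcomp_of_real_mult:
  fixes e :: "real \<times> real \<Rightarrow> real"
  assumes "partially_differentiable e" "partially_differentiable f"
  shows "Pcomp a1 a2 b j (\<lambda>x. of_real (e x) * f x)
    = (\<lambda>x. of_real (e x) * Pcomp a1 a2 b j f x - \<i> * of_real (partial j e x) * f x)"
proof -
  have "partially_differentiable (\<lambda>x. complex_of_real (e x))"
    using assms(1) unfolding partially_differentiable_def by (auto intro: differentiable_compose)
  then show ?thesis
    unfolding Pcomp_def[abs_def]
    by (simp add: partial_mult assms partial_of_real algebra_simps fun_eq_iff)
qed

lemma Hop_diff:
  assumes "smooth a1" "smooth a2" "smooth f" "smooth g"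
  shows "Hop V a1 a2 b (\<lambda>x. f x - g x) = (\<lambda>x. Hop V a1 a2 b f x - Hop V a1 a2 b g x)"
proof -
  have "partially_differentiable f" "partially_differentiable g"
    "partially_differentiable (Pcomp a1 a2 b j f)" "partially_differentiable (Pcomp a1 a2 b j g)" for j
    using assms by (auto intro!: smooth_imp_partially_differentiable smooth_Pcomp)
  then show ?thesis unfolding Hop_def[abs_def] by (simp add: Pcomp_diff algebra_simps)
qed

lemma Hop_of_real_mult:
  fixes e :: "real \<times> real \<Rightarrow> real"
  assumes a: "smooth a1" "smooth a2" and e: "smooth e" "partial 0 e = (\<lambda>_. 0)" and f: "smooth f"
  shows "Hop V a1 a2 b (\<lambda>x. of_real (e x) * f x) =
    (\<lambda>x. of_real (e x) * Hop V a1 a2 b f x - 2 * \<i> * of_real (partial 1 e x) * Pcomp a1 a2 b 1 f x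
        - of_real (partial 1 (partial 1 e) x) * f x)"
proof -
  let ?P = "Pcomp a1 a2 b"
  have pd: "partially_differentiable e" "partially_differentiable (partial 1 e)"
    "partially_differentiable f" "partially_differentiable (?P j f)"
    "partially_differentiable (\<lambda>x. \<i> * f x)"
    "partially_differentiable (\<lambda>x. of_real (e x) * ?P 1 f x)"
    "partially_differentiable (\<lambda>x. of_real (partial 1 e x) * (\<i> * f x))" for j
    using a e f
    by (auto intro!: smooth_imp_partially_differentiable smooth_Pcomp smooth_mult smooth_const
        smooth_of_real smooth_partial)
  have P0: "?P 0 (?P 0 (\<lambda>x. of_real (e x) * f x)) = (\<lambda>x. of_real (e x) * ?P 0 (?P 0 f) x)"
    by (simp add: Pcomp_of_real_mult pd e(2))
  have P1: "?P 1 (\<lambda>x. of_real (e x) * f x) =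
     (\<lambda>x. of_real (e x) * ?P 1 f x - of_real (partial 1 e x) * (\<i> * f x))"
    unfolding Pcomp_of_real_mult[OF pd(1,3)] by (simp add: fun_eq_iff algebra_simps)
  have P11: "?P 1 (?P 1 (\<lambda>x. of_real (e x) * f x)) =
     (\<lambda>x. of_real (e x) * ?P 1 (?P 1 f) x - 2 * \<i> * of_real (partial 1 e x) * ?P 1 f x
        - of_real (partial 1 (partial 1 e) x) * f x)"
    unfolding P1 Pcomp_diff[OF pd(6,7)] Pcomp_of_real_mult[OF pd(1,4)] Pcomp_of_real_mult[OF pd(2,5)]
      Pcomp_cmult[OF pd(3)]
    by (simp add: fun_eq_iff algebra_simps)
  show ?thesis unfolding Hop_def[abs_def] P0 P11 by (simp add: fun_eq_iff algebra_simps)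
qed

lemma Pcomp_eq_0_open:
  "open U \<Longrightarrow> x \<in> U \<Longrightarrow> (\<And>y. y \<in> U \<Longrightarrow> f y = 0) \<Longrightarrow> Pcomp a1 a2 b j f x = 0"
  by (simp add: Pcomp_def partial_eq_0_open)

lemma Hop_eq_0_open:
  "open U \<Longrightarrow> x \<in> U \<Longrightarrow> (\<And>y. y \<in> U \<Longrightarrow> f y = 0) \<Longrightarrow> Hop V a1 a2 b f x = 0"
  by (simp add: Hop_def Pcomp_eq_0_open)

definition has_compact_support :: "('a::real_normed_vector \<Rightarrow> 'b::zero) \<Rightarrow> bool" where
  "has_compact_support f \<longleftrightarrow> (\<exists>R. \<forall>x. norm x > R \<longrightarrow> f x = 0)"

lemma has_compact_supportE:
  assumes "has_compact_support f"
  obtains R where "\<And>x. norm x > R \<Longrightarrow> f x = 0"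
  using assms unfolding has_compact_support_def by blast

lemma has_compact_support_diff:
  assumes "has_compact_support f" "has_compact_support g"
  shows "has_compact_support (\<lambda>x. f x - (g x :: 'b::ab_group_add))"
proof -
  obtain R S where "\<And>x. norm x > R \<Longrightarrow> f x = 0" "\<And>x. norm x > S \<Longrightarrow> g x = 0"
    using assms has_compact_supportE by metis
  then show ?thesis unfolding has_compact_support_def by (intro exI[of _ "max R S"]) simp
qed

lemma has_compact_support_mult_left:
  "has_compact_support f \<Longrightarrow> has_compact_support (\<lambda>x. c x * (f x :: 'b::mult_zero))"
  unfolding has_compact_support_def by force

lemma open_norm_gt: "open {x :: 'a::real_normed_vector. norm x > R}"
  by (rule open_Collect_less) (auto intro: continuous_intros)

lemma Pcomp_eq_0_outside_ball:
  "(\<And>y. norm y > R \<Longrightarrow> f y = 0) \<Longrightarrow> norm x > R \<Longrightarrow> Pcomp a1 a2 b j f x = 0"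
  by (rule Pcomp_eq_0_open[OF open_norm_gt]) auto

lemma Hop_eq_0_outside_ball:
  "(\<And>y. norm y > R \<Longrightarrow> f y = 0) \<Longrightarrow> norm x > R \<Longrightarrow> Hop V a1 a2 b f x = 0"
  by (rule Hop_eq_0_open[OF open_norm_gt]) auto

lemma has_compact_support_Hop: "has_compact_support f \<Longrightarrow> has_compact_support (Hop V a1 a2 b f)"
  unfolding has_compact_support_def using Hop_eq_0_outside_ball by metis

section \<open>Integration by parts and the graph-norm estimate\<close>

lemma integrable_continuous_compact_support:
  fixes f :: "'a::euclidean_space \<Rightarrow> 'b::{banach, second_countable_topology}"
  assumes "continuous_on UNIV f" "has_compact_support f"
  shows "integrable lborel f"
proof -
  obtain R where R: "\<And>x. norm x > R \<Longrightarrow> f x = 0" using assms(2) has_compact_supportE by blast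
  have "integrable lborel (\<lambda>x. indicator (cball 0 R) x *\<^sub>R f x)"
    by (rule borel_integrable_compact) (auto intro: continuous_on_subset[OF assms(1)])
  moreover have "(\<lambda>x. indicator (cball 0 R) x *\<^sub>R f x) = f"
    using R by (auto simp: fun_eq_iff indicator_def)
  ultimately show ?thesis by simp
qed

lemma integral_deriv_compact_support_eq_0:
  fixes g g' :: "real \<Rightarrow> real"
  assumes "\<And>s. (g has_real_derivative g' s) (at s)" "continuous_on UNIV g'"
    and "\<And>s. \<bar>s\<bar> > R \<Longrightarrow> g s = 0" "\<And>s. \<bar>s\<bar> > R \<Longrightarrow> g' s = 0"
  shows "integral\<^sup>L lborel g' = 0"
proof -
  define a where "a = \<bar>R\<bar> + 1"
  have "g' s = 0" if "s \<notin> {-a .. a}" for s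
    using assms(4) that unfolding a_def by force
  then have "(\<lambda>s. indicator {-a .. a} s *\<^sub>R g' s) = g'"
    by (auto simp: fun_eq_iff indicator_def)
  moreover have "integral\<^sup>L lborel (\<lambda>s. indicator {-a .. a} s *\<^sub>R g' s) = g a - g (-a)"
    using assms(1,2) unfolding a_def
    by (intro integral_FTC_atLeastAtMost)
       (auto simp: has_real_derivative_iff_has_vector_derivative has_vector_derivative_at_within
        intro: continuous_on_subset)
  moreover have "g a = 0" "g (-a) = 0" using assms(3) unfolding a_def by simp_all
  ultimately show ?thesis by simp
qed

lemma integral_partial_compact_support_eq_0:
  fixes F F' :: "real \<times> real \<Rightarrow> real"
  assumes d: "\<And>x. ((\<lambda>t. F (x + t *\<^sub>R coord_dir j)) has_real_derivative F' x) (at 0)"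
    and c: "continuous_on UNIV F'"
    and z: "\<And>x. norm x > R \<Longrightarrow> F x = 0" "\<And>x. norm x > R \<Longrightarrow> F' x = 0"
  shows "integral\<^sup>L lborel F' = 0"
proof -
  have line: "integral\<^sup>L lborel (\<lambda>t. F' (x + t *\<^sub>R coord_dir j)) = 0" for x
  proof (rule integral_deriv_compact_support_eq_0[where R = "R + norm x"])
    have "norm (coord_dir j) = 1" by (simp add: coord_dir_def)
    then have far: "norm (x + t *\<^sub>R coord_dir j) > R" if "\<bar>t\<bar> > R + norm x" for t
      using that norm_triangle_ineq2[of "t *\<^sub>R coord_dir j" "- x"] by (simp add: add.commute)
    show "F (x + t *\<^sub>R coord_dir j) = 0" "F' (x + t *\<^sub>R coord_dir j) = 0" if "\<bar>t\<bar> > R + norm x" for t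
      using z far[OF that] by simp_all
    show "continuous_on UNIV (\<lambda>t. F' (x + t *\<^sub>R coord_dir j))"
      by (auto intro!: continuous_on_compose2[OF c] continuous_intros)
    show "((\<lambda>t. F (x + t *\<^sub>R coord_dir j)) has_real_derivative F' (x + s *\<^sub>R coord_dir j)) (at s)" for s
      using DERIV_shift[of "\<lambda>t. F (x + t *\<^sub>R coord_dir j)" _ 0 s] d[of "x + s *\<^sub>R coord_dir j"]
      by (simp add: algebra_simps scaleR_add_left)
  qed
  have "has_compact_support F'" unfolding has_compact_support_def using z(2) by blast
  then have int: "integrable (lborel \<Otimes>\<^sub>M lborel) F'"
    unfolding lborel_prod by (rule integrable_continuous_compact_support[OF c])
  show ?thesis
  proof (cases "j = 0")
    case True
    have "integral\<^sup>L lborel F' = (\<integral>u. (\<integral>s. F' (s, u) \<partial>lborel) \<partial>lborel)"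
      using lborel_pair.integral_snd[of "\<lambda>s u. F' (s, u)"] int by (simp add: lborel_prod)
    also have "\<dots> = 0" using line[of "(0, _)"] True by (simp add: coord_dir_def)
    finally show ?thesis .
  next
    case False
    have "integral\<^sup>L lborel F' = (\<integral>u. (\<integral>s. F' (u, s) \<partial>lborel) \<partial>lborel)"
      using lborel_pair.integral_fst'[OF int] by (simp add: lborel_prod)
    also have "\<dots> = 0" using line[of "(_, 0)"] False by (simp add: coord_dir_def)
    finally show ?thesis .
  qed
qed

text \<open>The derivative of \<open>Im (P\<^sub>j f \<cdot> f\<^sup>*)\<close> along \<open>x\<^sub>j\<close>; its integral vanishes.\<close>

definition ibp_term ::
    "(real \<times> real \<Rightarrow> real) \<Rightarrow> (real \<times> real \<Rightarrow> real) \<Rightarrow> real \<Rightarrow> nat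
      \<Rightarrow> (real \<times> real \<Rightarrow> complex) \<Rightarrow> real \<times> real \<Rightarrow> real" where
  "ibp_term a1 a2 b j f x =
    Re (Pcomp a1 a2 b j (Pcomp a1 a2 b j f) x * cnj (f x)) - (cmod (Pcomp a1 a2 b j f x))\<^sup>2"

lemma has_real_derivative_Im_Pcomp_mult_cnj:
  assumes "smooth a1" "smooth a2" "smooth f"
  shows "((\<lambda>t. Im (Pcomp a1 a2 b j f (x + t *\<^sub>R coord_dir j) * cnj (f (x + t *\<^sub>R coord_dir j))))
    has_real_derivative ibp_term a1 a2 b j f x) (at 0)"
proof -
  let ?w = "Pcomp a1 a2 b j f"
  have "partially_differentiable ?w" "partially_differentiable f"
    using assms by (auto intro!: smooth_imp_partially_differentiable smooth_Pcomp)
  from has_vector_derivative_mult[OF has_vector_derivative_partial[OF this(1)]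
      has_vector_derivative_cnj[OF has_vector_derivative_partial[OF this(2)]]]
  have "((\<lambda>t. ?w (x + t *\<^sub>R coord_dir j) * cnj (f (x + t *\<^sub>R coord_dir j))) has_vector_derivative
      ?w x * cnj (partial j f x) + partial j ?w x * cnj (f x)) (at 0)"
    by simp
  moreover have "Im (?w x * cnj (partial j f x) + partial j ?w x * cnj (f x)) = ibp_term a1 a2 b j f x"
    unfolding ibp_term_def Pcomp_def[of _ _ _ _ ?w] Pcomp_def[of _ _ _ _ f] cmod_power2
    by (simp add: power2_eq_square algebra_simps)
  ultimately show ?thesis by (auto dest: has_field_derivative_Im)
qed

lemma integral_ibp_term_eq_0:
  assumes a: "smooth a1" "smooth a2" and f: "smooth f" "has_compact_support f"
  shows "integral\<^sup>L lborel (ibp_term a1 a2 b j f) = 0"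
proof -
  obtain R where R: "\<And>x. norm x > R \<Longrightarrow> f x = 0" using f(2) has_compact_supportE by blast
  moreover note Pcomp_eq_0_outside_ball[OF R]
  moreover note Pcomp_eq_0_outside_ball[OF Pcomp_eq_0_outside_ball[OF R]]
  moreover have "continuous_on UNIV (Pcomp a1 a2 b j (Pcomp a1 a2 b j f))"
    "continuous_on UNIV (Pcomp a1 a2 b j f)" "continuous_on UNIV f"
    using a f by (auto intro!: smooth_imp_continuous smooth_Pcomp)
  ultimately show ?thesis
    unfolding ibp_term_def[abs_def]
    by (intro integral_partial_compact_support_eq_0[where R = R and j = j
          and F = "\<lambda>x. Im (Pcomp a1 a2 b j f x * cnj (f x))"]
        has_real_derivative_Im_Pcomp_mult_cnj[unfolded ibp_term_def] a f continuous_intros) auto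
qed

lemma Re_mult_cnj_le: "Re (z * cnj w) \<le> (cmod z)\<^sup>2 / 2 + (cmod w)\<^sup>2 / 2"
proof -
  have "Re (z * cnj w) \<le> cmod z * cmod w"
    using complex_Re_le_cmod[of "z * cnj w"] by (simp add: norm_mult)
  also have "\<dots> \<le> (cmod z)\<^sup>2 / 2 + (cmod w)\<^sup>2 / 2"
    using sum_squares_bound[of "cmod z" "cmod w"] by (simp add: power2_eq_square field_simps)
  finally show ?thesis .
qed

lemma norm_Pcomp_sq_le:
  assumes "\<bar>V x\<bar> \<le> M" "j \<in> {0, 1}"
  shows "(cmod (Pcomp a1 a2 b j f x))\<^sup>2 \<le>
    (1 + M) * ((cmod (Hop V a1 a2 b f x))\<^sup>2 + (cmod (f x))\<^sup>2) - ibp_term a1 a2 b 0 f x - ibp_term a1 a2 b 1 f x"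
proof -
  let ?P = "Pcomp a1 a2 b" and ?H = "Hop V a1 a2 b f x"
  have "Re (?H * cnj (f x)) = ibp_term a1 a2 b 0 f x + ibp_term a1 a2 b 1 f x
      + (cmod (?P 0 f x))\<^sup>2 + (cmod (?P 1 f x))\<^sup>2 + V x * (cmod (f x))\<^sup>2"
    using complex_norm_square[of "f x", symmetric] unfolding Hop_def ibp_term_def
    by (simp add: distrib_right mult.assoc del: complex_cnj_mult)
  moreover have "Re (?H * cnj (f x)) \<le> (cmod ?H)\<^sup>2 / 2 + (cmod (f x))\<^sup>2 / 2"
    by (rule Re_mult_cnj_le)
  moreover have "- (M * (cmod (f x))\<^sup>2) \<le> V x * (cmod (f x))\<^sup>2"
    using mult_right_mono[of "- M" "V x" "(cmod (f x))\<^sup>2"] assms(1) by simp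
  moreover have "0 \<le> M * (cmod ?H)\<^sup>2" using assms(1) by simp
  moreover have "(cmod (?P j f x))\<^sup>2 \<le> (cmod (?P 0 f x))\<^sup>2 + (cmod (?P 1 f x))\<^sup>2"
    using assms(2) by auto
  moreover have "(1 + M) * ((cmod ?H)\<^sup>2 + (cmod (f x))\<^sup>2) =
      (cmod ?H)\<^sup>2 + (cmod (f x))\<^sup>2 + M * (cmod ?H)\<^sup>2 + M * (cmod (f x))\<^sup>2"
    by (simp add: algebra_simps)
  ultimately show ?thesis
    using zero_le_power2[of "cmod (f x)"] zero_le_power2[of "cmod ?H"] by linarith
qed

lemma nn_integral_Pcomp_le:
  assumes a: "smooth a1" "smooth a2" and V: "smooth V" "\<And>x. \<bar>V x\<bar> \<le> M"
    and f: "smooth f" "has_compact_support f" and j: "j \<in> {0, 1}"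
  shows "(\<integral>\<^sup>+x. (cmod (Pcomp a1 a2 b j f x))\<^sup>2 \<partial>lborel) \<le>
         ennreal (1 + M) * ((\<integral>\<^sup>+x. (cmod (Hop V a1 a2 b f x))\<^sup>2 \<partial>lborel) + (\<integral>\<^sup>+x. (cmod (f x))\<^sup>2 \<partial>lborel))"
proof -
  let ?P = "Pcomp a1 a2 b" and ?H = "Hop V a1 a2 b f"
  define L where "L x = (cmod (?P j f x))\<^sup>2" for x
  define Q where "Q x = (1 + M) * ((cmod (?H x))\<^sup>2 + (cmod (f x))\<^sup>2)" for x
  have M: "M \<ge> 0" using V(2)[of 0] by simp
  have cont: "continuous_on UNIV (?P i (?P i f))" "continuous_on UNIV (?P i f)"
     "continuous_on UNIV f" "continuous_on UNIV ?H" for i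
    using a f V by (auto intro!: smooth_imp_continuous smooth_Pcomp smooth_Hop)
  obtain R where R: "\<And>x. norm x > R \<Longrightarrow> f x = 0" using f(2) has_compact_supportE by blast
  have P: "?P i f x = 0" if "norm x > R" for i x by (rule Pcomp_eq_0_outside_ball[OF R that])
  have PP: "?P i (?P i f) x = 0" if "norm x > R" for i x by (rule Pcomp_eq_0_outside_ball[OF P that])
  have H: "?H x = 0" if "norm x > R" for x by (rule Hop_eq_0_outside_ball[OF R that])
  have supp: "has_compact_support g" if "\<And>x. norm x > R \<Longrightarrow> g x = (0::real)" for g :: "_ \<Rightarrow> real"
    using that unfolding has_compact_support_def by blast
  have int: "integrable lborel (ibp_term a1 a2 b i f)" "integrable lborel L" "integrable lborel Q" for i
    unfolding ibp_term_def[abs_def] L_def Q_def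
    by (intro integrable_continuous_compact_support continuous_intros cont supp; simp add: R P PP H)+
  have "integral\<^sup>L lborel L \<le> integral\<^sup>L lborel (\<lambda>x. Q x - ibp_term a1 a2 b 0 f x - ibp_term a1 a2 b 1 f x)"
    using int norm_Pcomp_sq_le[OF V(2) j] unfolding L_def Q_def by (intro integral_mono) auto
  also have "\<dots> = integral\<^sup>L lborel Q"
    using int integral_ibp_term_eq_0[OF a f] by simp
  finally have "ennreal (integral\<^sup>L lborel L) \<le> ennreal (integral\<^sup>L lborel Q)"
    by (rule ennreal_leI)
  then have "(\<integral>\<^sup>+x. L x \<partial>lborel) \<le> (\<integral>\<^sup>+x. Q x \<partial>lborel)"
    using int M by (subst (1 2) nn_integral_eq_integral) (auto simp: L_def Q_def)
  also have "\<dots> = ennreal (1 + M) * ((\<integral>\<^sup>+x. (cmod (?H x))\<^sup>2 \<partial>lborel) + (\<integral>\<^sup>+x. (cmod (f x))\<^sup>2 \<partial>lborel))"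
  proof -
    have [measurable]: "?H \<in> borel_measurable lborel" "f \<in> borel_measurable lborel"
      using cont by (auto intro: borel_measurable_continuous_onI)
    show ?thesis
      using M unfolding Q_def by (simp add: ennreal_mult ennreal_plus nn_integral_cmult nn_integral_add)
  qed
  finally show ?thesis unfolding L_def .
qed

lemma sum3_power2_le: "((x::real) + y + z)\<^sup>2 \<le> 3 * (x\<^sup>2 + y\<^sup>2 + z\<^sup>2)"
  using sum_squares_ge_zero[of "x - y" "y - z"] zero_le_power2[of "x - z"]
  by (simp add: power2_eq_square algebra_simps)

lemma norm_Hop_of_real_mult_sq_le:
  fixes e :: "real \<times> real \<Rightarrow> real"
  assumes a: "smooth a1" "smooth a2" and e: "smooth e" "partial 0 e = (\<lambda>_. 0)" and f: "smooth f"
    and bounds: "\<bar>e x\<bar> \<le> 1" "\<bar>partial 1 e x\<bar> \<le> B1" "\<bar>partial 1 (partial 1 e) x\<bar> \<le> B2"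
  shows "(cmod (Hop V a1 a2 b (\<lambda>x. of_real (e x) * f x) x))\<^sup>2 \<le>
    3 * (cmod (Hop V a1 a2 b f x))\<^sup>2 + 12 * B1\<^sup>2 * (cmod (Pcomp a1 a2 b 1 f x))\<^sup>2 + 3 * B2\<^sup>2 * (cmod (f x))\<^sup>2"
proof -
  let ?H = "Hop V a1 a2 b f x" and ?P = "Pcomp a1 a2 b 1 f x"
  have "cmod (Hop V a1 a2 b (\<lambda>x. of_real (e x) * f x) x) \<le>
      cmod (of_real (e x) * ?H) + cmod (2 * \<i> * of_real (partial 1 e x) * ?P)
      + cmod (of_real (partial 1 (partial 1 e) x) * f x)"
    unfolding Hop_of_real_mult[OF a e f] by (rule order_trans[OF norm_triangle_ineq4 add_right_mono])
      (rule norm_triangle_ineq4)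
  also have "\<dots> \<le> cmod ?H + 2 * B1 * cmod ?P + B2 * cmod (f x)"
    using bounds by (intro add_mono) (auto simp: norm_mult intro!: mult_right_mono mult_left_le_one_le)
  finally have "(cmod (Hop V a1 a2 b (\<lambda>x. of_real (e x) * f x) x))\<^sup>2 \<le>
      (cmod ?H + 2 * B1 * cmod ?P + B2 * cmod (f x))\<^sup>2"
    by (rule power_mono) simp
  also have "\<dots> \<le> 3 * ((cmod ?H)\<^sup>2 + (2 * B1 * cmod ?P)\<^sup>2 + (B2 * cmod (f x))\<^sup>2)"
    by (rule sum3_power2_le)
  finally show ?thesis by (simp add: power_mult_distrib algebra_simps)
qed

lemma nn_integral_Hop_of_real_mult_le:
  fixes e :: "real \<times> real \<Rightarrow> real"
  assumes a: "smooth a1" "smooth a2" and V: "smooth V" "\<And>x. \<bar>V x\<bar> \<le> M"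
    and e: "smooth e" "partial 0 e = (\<lambda>_. 0)"
    and bounds: "\<And>x. \<bar>e x\<bar> \<le> 1" "\<And>x. \<bar>partial 1 e x\<bar> \<le> B1" "\<And>x. \<bar>partial 1 (partial 1 e) x\<bar> \<le> B2"
    and f: "smooth f" "has_compact_support f"
  shows "(\<integral>\<^sup>+x. (cmod (Hop V a1 a2 b (\<lambda>x. of_real (e x) * f x) x))\<^sup>2 \<partial>lborel)
     \<le> ennreal (3 + 12 * B1\<^sup>2 * (1 + M) + 3 * B2\<^sup>2) *
       ((\<integral>\<^sup>+x. (cmod (Hop V a1 a2 b f x))\<^sup>2 \<partial>lborel) + (\<integral>\<^sup>+x. (cmod (f x))\<^sup>2 \<partial>lborel))"
proof -
  define IH where "IH = (\<integral>\<^sup>+x. (cmod (Hop V a1 a2 b f x))\<^sup>2 \<partial>lborel)"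
  define IP where "IP = (\<integral>\<^sup>+x. (cmod (Pcomp a1 a2 b 1 f x))\<^sup>2 \<partial>lborel)"
  define IF where "IF = (\<integral>\<^sup>+x. (cmod (f x))\<^sup>2 \<partial>lborel)"
  have M: "M \<ge> 0" using V(2)[of 0] by simp
  have [measurable]: "Hop V a1 a2 b f \<in> borel_measurable lborel"
    "Pcomp a1 a2 b 1 f \<in> borel_measurable lborel" "f \<in> borel_measurable lborel"
    by (intro smooth_imp_borel_measurable smooth_Hop smooth_Pcomp a V(1) f(1))+
  have "(\<integral>\<^sup>+x. (cmod (Hop V a1 a2 b (\<lambda>x. of_real (e x) * f x) x))\<^sup>2 \<partial>lborel) \<le>
      (\<integral>\<^sup>+x. 3 * ennreal ((cmod (Hop V a1 a2 b f x))\<^sup>2)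
        + ennreal (12 * B1\<^sup>2) * ennreal ((cmod (Pcomp a1 a2 b 1 f x))\<^sup>2)
        + ennreal (3 * B2\<^sup>2) * ennreal ((cmod (f x))\<^sup>2) \<partial>lborel)"
  proof (rule nn_integral_mono)
    fix x
    have "ennreal ((cmod (Hop V a1 a2 b (\<lambda>x. of_real (e x) * f x) x))\<^sup>2) \<le>
      ennreal (3 * (cmod (Hop V a1 a2 b f x))\<^sup>2 + 12 * B1\<^sup>2 * (cmod (Pcomp a1 a2 b 1 f x))\<^sup>2
        + 3 * B2\<^sup>2 * (cmod (f x))\<^sup>2)"
      by (intro ennreal_leI norm_Hop_of_real_mult_sq_le a e f(1) bounds)
    then show "ennreal ((cmod (Hop V a1 a2 b (\<lambda>x. of_real (e x) * f x) x))\<^sup>2) \<le>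
      3 * ennreal ((cmod (Hop V a1 a2 b f x))\<^sup>2)
        + ennreal (12 * B1\<^sup>2) * ennreal ((cmod (Pcomp a1 a2 b 1 f x))\<^sup>2)
        + ennreal (3 * B2\<^sup>2) * ennreal ((cmod (f x))\<^sup>2)"
      by (simp add: ennreal_plus ennreal_mult del: ennreal_numeral) simp
  qed
  also have "\<dots> = 3 * IH + ennreal (12 * B1\<^sup>2) * IP + ennreal (3 * B2\<^sup>2) * IF"
    unfolding IH_def IP_def IF_def by (simp add: nn_integral_add nn_integral_cmult del: One_nat_def)
  also have "\<dots> \<le> 3 * IH + ennreal (12 * B1\<^sup>2) * (ennreal (1 + M) * (IH + IF)) + ennreal (3 * B2\<^sup>2) * IF"
    using nn_integral_Pcomp_le[OF a V f, of 1] unfolding IH_def IP_def IF_def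
    by (intro add_mono mult_left_mono order_refl) auto
  also have "\<dots> \<le> ennreal (3 + 12 * B1\<^sup>2 * (1 + M) + 3 * B2\<^sup>2) * (IH + IF)"
    using M by (simp add: ennreal_plus ennreal_mult algebra_simps add_increasing2 add_mono)
  finally show ?thesis unfolding IH_def IF_def .
qed

section \<open>Square-integrable functions\<close>

lemma nn_integral_sq_diff_le:
  fixes u v w :: "'a \<Rightarrow> 'b::{real_normed_vector, second_countable_topology}"
  assumes [measurable]: "u \<in> borel_measurable M" "v \<in> borel_measurable M" "w \<in> borel_measurable M"
  shows "(\<integral>\<^sup>+x. (norm (u x - v x))\<^sup>2 \<partial>M) \<le>
    2 * (\<integral>\<^sup>+x. (norm (u x - w x))\<^sup>2 \<partial>M) + 2 * (\<integral>\<^sup>+x. (norm (v x - w x))\<^sup>2 \<partial>M)"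
proof -
  have "ennreal ((norm (u x - v x))\<^sup>2) \<le>
      2 * ennreal ((norm (u x - w x))\<^sup>2) + 2 * ennreal ((norm (v x - w x))\<^sup>2)" for x
  proof -
    have "norm (u x - v x) \<le> norm (u x - w x) + norm (v x - w x)"
      using norm_triangle_ineq4[of "u x - w x" "v x - w x"] by simp
    then have "(norm (u x - v x))\<^sup>2 \<le> 2 * (norm (u x - w x))\<^sup>2 + 2 * (norm (v x - w x))\<^sup>2"
      using sum_squares_bound[of "norm (u x - w x)" "norm (v x - w x)"]
        power_mono[of _ _ 2] by (fastforce simp: power2_eq_square algebra_simps)
    then have "ennreal ((norm (u x - v x))\<^sup>2) \<le>
        ennreal (2 * (norm (u x - w x))\<^sup>2 + 2 * (norm (v x - w x))\<^sup>2)"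
      by (rule ennreal_leI)
    then show ?thesis by (simp add: ennreal_plus ennreal_mult)
  qed
  then have "(\<integral>\<^sup>+x. (norm (u x - v x))\<^sup>2 \<partial>M) \<le>
      (\<integral>\<^sup>+x. 2 * ennreal ((norm (u x - w x))\<^sup>2) + 2 * ennreal ((norm (v x - w x))\<^sup>2) \<partial>M)"
    by (intro nn_integral_mono)
  also have "\<dots> = 2 * (\<integral>\<^sup>+x. (norm (u x - w x))\<^sup>2 \<partial>M) + 2 * (\<integral>\<^sup>+x. (norm (v x - w x))\<^sup>2 \<partial>M)"
    by (simp add: nn_integral_add nn_integral_cmult)
  finally show ?thesis .
qed

lemma L2_iff_nn_integral_finite:
  "L2 f \<longleftrightarrow> f \<in> borel_measurable lborel \<and> (\<integral>\<^sup>+x. (cmod (f x))\<^sup>2 \<partial>lborel) < \<infinity>"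
  unfolding L2_def by (auto simp: integrable_iff_bounded)

lemma L2_of_real_mult:
  assumes "L2 f" "e \<in> borel_measurable lborel" "\<And>x. \<bar>e x\<bar> \<le> 1"
  shows "L2 (\<lambda>x. of_real (e x) * f x)"
proof -
  have "(\<integral>\<^sup>+x. (cmod (of_real (e x) * f x))\<^sup>2 \<partial>lborel) \<le> (\<integral>\<^sup>+x. (cmod (f x))\<^sup>2 \<partial>lborel)"
    using assms(3) by (intro nn_integral_mono ennreal_leI power_mono)
      (auto simp: norm_mult intro: mult_left_le_one_le)
  then show ?thesis using assms(1,2) unfolding L2_iff_nn_integral_finite by (auto intro: le_less_trans)
qed

lemma L2_if_L2_conv:
  assumes "\<And>k. L2 (u k)" "F \<in> borel_measurable lborel" "L2_conv u F"
  shows "L2 F"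
proof -
  obtain k where k: "(\<integral>\<^sup>+x. (cmod (u k x - F x))\<^sup>2 \<partial>lborel) < 1"
    using order_tendstoD(2)[OF assms(3)[unfolded L2_conv_def], of 1] by (auto dest: eventually_happens)
  have [measurable]: "u k \<in> borel_measurable lborel" using assms(1) by (simp add: L2_def)
  have "(\<integral>\<^sup>+x. (cmod (F x - 0))\<^sup>2 \<partial>lborel) \<le>
      2 * (\<integral>\<^sup>+x. (cmod (F x - u k x))\<^sup>2 \<partial>lborel) + 2 * (\<integral>\<^sup>+x. (cmod (0 - u k x))\<^sup>2 \<partial>lborel)"
    using assms(2) by (intro nn_integral_sq_diff_le) auto
  also have "\<dots> < \<infinity>"
    using k assms(1)[of k] unfolding L2_iff_nn_integral_finite
    by (simp add: norm_minus_commute ennreal_mult_less_top order_less_trans[OF _ ennreal_one_less_top])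
  finally show ?thesis using assms(2) unfolding L2_iff_nn_integral_finite by simp
qed

lemma L2_conv_of_real_mult:
  assumes "L2_conv u f" "\<And>x. \<bar>e x\<bar> \<le> 1"
  shows "L2_conv (\<lambda>k x. of_real (e x) * u k x) (\<lambda>x. of_real (e x) * f x)"
  unfolding L2_conv_def
proof (rule tendsto_sandwich[OF _ _ tendsto_const assms(1)[unfolded L2_conv_def]])
  have "cmod (of_real (e x) * u k x - of_real (e x) * f x) \<le> cmod (u k x - f x)" for k x
    using assms(2)[of x]
    by (auto simp: right_diff_distrib[symmetric] norm_mult intro: mult_left_le_one_le)
  then show "\<forall>\<^sub>F k in sequentially. (\<integral>\<^sup>+x. (cmod (of_real (e x) * u k x - of_real (e x) * f x))\<^sup>2 \<partial>lborel)
      \<le> (\<integral>\<^sup>+x. (cmod (u k x - f x))\<^sup>2 \<partial>lborel)"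
    by (intro always_eventually allI nn_integral_mono ennreal_leI power_mono) auto
qed auto

lemma L2_if_continuous_compact_support:
  assumes "continuous_on UNIV f" "has_compact_support f"
  shows "L2 f"
  unfolding L2_def
proof
  show "f \<in> borel_measurable lborel" using assms(1) by (simp add: borel_measurable_continuous_onI)
  have "has_compact_support (\<lambda>x. (cmod (f x))\<^sup>2)"
    using assms(2) unfolding has_compact_support_def by auto
  then show "integrable lborel (\<lambda>x. (cmod (f x))\<^sup>2)"
    by (intro integrable_continuous_compact_support continuous_intros assms(1))
qed

lemma LIMSEQ_subseq_less:
  fixes c \<epsilon> :: "nat \<Rightarrow> 'a::linorder_topology"
  assumes "c \<longlonglongrightarrow> l" "\<And>k. l < \<epsilon> k"
  obtains r where "strict_mono r" "\<And>k. c (r k) < \<epsilon> k"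
proof -
  have "\<exists>N::nat. \<forall>n\<ge>N. c n < \<epsilon> k" for k
    using order_tendstoD(2)[OF assms(1) assms(2)] by (simp add: eventually_sequentially)
  then obtain N where N: "\<And>k n. n \<ge> N k \<Longrightarrow> c n < \<epsilon> k" by metis
  define r where "r k = k + (\<Sum>i\<le>k. N i)" for k
  have "strict_mono r" unfolding strict_mono_Suc_iff r_def by simp
  moreover have "N k \<le> r k" for k
    unfolding r_def by (rule trans_le_add2, rule member_le_sum) auto
  ultimately show ?thesis using N that by blast
qed

lemma summable_norm_if_summable_weighted_sq:
  fixes d :: "nat \<Rightarrow> 'a::real_normed_vector"
  assumes "summable (\<lambda>k. 2^k * (norm (d k))\<^sup>2)"
  shows "summable (\<lambda>k. norm (d k))"
proof (rule summable_comparison_test'[where N = 0])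
  show "summable (\<lambda>k. ((1/2)^k + 2^k * (norm (d k))\<^sup>2) / 2)"
    by (intro summable_divide summable_add summable_geometric assms) simp
  show "norm (norm (d k)) \<le> ((1/2)^k + 2^k * (norm (d k))\<^sup>2) / 2" for k
  proof -
    have "0 \<le> (1 - 2^k * norm (d k))\<^sup>2 / (2::real)^k" by simp
    also have "\<dots> = (1/2)^k + 2^k * (norm (d k))\<^sup>2 - 2 * norm (d k)"
      by (simp add: field_simps power2_eq_square power_divide)
    finally show ?thesis by simp
  qed
qed

text \<open>The limit is the telescoping series, which converges wherever the weighted sum \<open>S\<close> below is
  finite, hence almost everywhere.\<close>

lemma AE_convergent_if_nn_integral_sq_diff_le:
  fixes v :: "nat \<Rightarrow> 'a \<Rightarrow> complex"
  assumes [measurable]: "\<And>k. v k \<in> borel_measurable M"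
    and diff: "\<And>k. (\<integral>\<^sup>+x. (cmod (v (Suc k) x - v k x))\<^sup>2 \<partial>M) \<le> ennreal ((1/8)^k)"
  obtains f where "f \<in> borel_measurable M" "AE x in M. (\<lambda>k. v k x) \<longlonglongrightarrow> f x"
proof -
  define d where "d k x = v (Suc k) x - v k x" for k x
  define S where "S x = (\<Sum>k. ennreal (2^k * (cmod (d k x))\<^sup>2))" for x
  have [measurable]: "d k \<in> borel_measurable M" for k unfolding d_def by measurable
  have [measurable]: "S \<in> borel_measurable M" unfolding S_def by measurable
  have "(\<integral>\<^sup>+x. S x \<partial>M) = (\<Sum>k. ennreal (2^k) * (\<integral>\<^sup>+x. (cmod (d k x))\<^sup>2 \<partial>M))"
    unfolding S_def by (subst nn_integral_suminf) (auto simp: ennreal_mult nn_integral_cmult)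
  also have "\<dots> \<le> (\<Sum>k. ennreal ((1/4)^k))"
  proof (rule suminf_le)
    fix k
    have "ennreal (2^k) * (\<integral>\<^sup>+x. (cmod (d k x))\<^sup>2 \<partial>M) \<le> ennreal (2^k) * ennreal ((1/8)^k)"
      using diff[of k] unfolding d_def by (rule mult_left_mono) simp
    also have "\<dots> = ennreal ((1/4)^k)"
      by (simp add: ennreal_mult[symmetric] power_mult_distrib[symmetric] del: ennreal_mult)
    finally show "ennreal (2^k) * (\<integral>\<^sup>+x. (cmod (d k x))\<^sup>2 \<partial>M) \<le> ennreal ((1/4)^k)" .
  qed auto
  also have "\<dots> < \<infinity>"
    by (subst suminf_ennreal2) (auto intro!: summable_geometric)
  finally have finite: "AE x in M. S x \<noteq> \<infinity>" by (intro nn_integral_PInf_AE) auto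
  have conv: "(\<lambda>k. v k x) \<longlonglongrightarrow> v 0 x + (\<Sum>k. d k x)" if "S x \<noteq> \<infinity>" for x
  proof -
    have "summable (\<lambda>k. 2^k * (cmod (d k x))\<^sup>2)"
      using that summable_iff_suminf_neq_top[of "\<lambda>k. 2^k * (cmod (d k x))\<^sup>2"] unfolding S_def by auto
    then have "summable (\<lambda>k. d k x)"
      by (rule summable_norm_cancel[OF summable_norm_if_summable_weighted_sq])
    then have "(\<lambda>n. v 0 x + (\<Sum>k<n. d k x)) \<longlonglongrightarrow> v 0 x + (\<Sum>k. d k x)"
      by (intro tendsto_add tendsto_const summable_LIMSEQ)
    moreover have "v 0 x + (\<Sum>k<n. d k x) = v n x" for n
      unfolding d_def using sum_lessThan_telescope[of "\<lambda>k. v k x" n] by simp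
    ultimately show ?thesis by simp
  qed
  from finite have "AE x in M. (\<lambda>k. v k x) \<longlonglongrightarrow> (if S x = \<infinity> then 0 else v 0 x + (\<Sum>k. d k x))"
    by eventually_elim (simp add: conv)
  moreover have "(\<lambda>x. if S x = \<infinity> then 0 else v 0 x + (\<Sum>k. d k x)) \<in> borel_measurable M"
    by measurable
  ultimately show ?thesis using that by blast
qed

text \<open>Fatou's lemma passes the Cauchy bound to the limit.\<close>

lemma nn_integral_sq_diff_limit_le:
  fixes v :: "nat \<Rightarrow> 'a \<Rightarrow> complex"
  assumes [measurable]: "\<And>k. v k \<in> borel_measurable M"
    and lim: "AE x in M. (\<lambda>m. v m x) \<longlonglongrightarrow> f x"
    and cauchy: "\<And>m. (\<integral>\<^sup>+x. (cmod (v k x - v m x))\<^sup>2 \<partial>M) \<le> a + c m" and c: "c \<longlonglongrightarrow> 0"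
  shows "(\<integral>\<^sup>+x. (cmod (v k x - f x))\<^sup>2 \<partial>M) \<le> a"
proof -
  have "AE x in M. ennreal ((cmod (v k x - f x))\<^sup>2) = liminf (\<lambda>m. ennreal ((cmod (v k x - v m x))\<^sup>2))"
    using lim by eventually_elim (rule lim_imp_Liminf[symmetric]; auto intro!: tendsto_intros)
  then have "(\<integral>\<^sup>+x. (cmod (v k x - f x))\<^sup>2 \<partial>M) =
      (\<integral>\<^sup>+x. liminf (\<lambda>m. ennreal ((cmod (v k x - v m x))\<^sup>2)) \<partial>M)"
    by (rule nn_integral_cong_AE)
  also have "\<dots> \<le> liminf (\<lambda>m. \<integral>\<^sup>+x. (cmod (v k x - v m x))\<^sup>2 \<partial>M)"
    by (rule nn_integral_liminf) measurable
  also have "\<dots> \<le> liminf (\<lambda>m. a + c m)"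
    by (intro Liminf_mono always_eventually allI cauchy)
  also have "\<dots> = a"
    using tendsto_add[OF tendsto_const c, of a] by (simp add: lim_imp_Liminf)
  finally show ?thesis .
qed

lemma L2_Cauchy_subseq_convergent:
  fixes u :: "nat \<Rightarrow> 'a \<Rightarrow> complex" and c :: "nat \<Rightarrow> ennreal"
  assumes [measurable]: "\<And>n. u n \<in> borel_measurable M"
    and c: "c \<longlonglongrightarrow> 0"
    and cauchy: "\<And>m n. (\<integral>\<^sup>+x. (cmod (u n x - u m x))\<^sup>2 \<partial>M) \<le> c n + c m"
  obtains r f where "strict_mono r" "f \<in> borel_measurable M"
    "(\<lambda>k. \<integral>\<^sup>+x. (cmod (u (r k) x - f x))\<^sup>2 \<partial>M) \<longlonglongrightarrow> 0"
proof -
  obtain r where r: "strict_mono r" and cr: "\<And>k. c (r k) < ennreal ((1/16)^k / 2)"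
    using LIMSEQ_subseq_less[OF c, of "\<lambda>k. ennreal ((1/16)^k / 2)"] by auto
  have cr0: "(\<lambda>k. c (r k)) \<longlonglongrightarrow> 0" using LIMSEQ_subseq_LIMSEQ[OF c r] by (simp add: comp_def)
  have diff: "(\<integral>\<^sup>+x. (cmod (u (r (Suc k)) x - u (r k) x))\<^sup>2 \<partial>M) \<le> ennreal ((1/8)^k)" for k
  proof -
    have "c (r (Suc k)) \<le> ennreal ((1/16)^k / 2)"
      using cr[of "Suc k"] by (rule order.trans[OF less_imp_le]) (simp add: ennreal_leI)
    then have "c (r (Suc k)) + c (r k) \<le> ennreal ((1/16)^k / 2) + ennreal ((1/16)^k / 2)"
      using cr[of k] by (intro add_mono) auto
    also have "\<dots> \<le> ennreal ((1/8)^k)"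
      by (simp add: ennreal_plus[symmetric] power_mono del: ennreal_plus)
    finally show ?thesis using cauchy order_trans by blast
  qed
  then obtain f where f [measurable]: "f \<in> borel_measurable M"
    and lim: "AE x in M. (\<lambda>k. u (r k) x) \<longlonglongrightarrow> f x"
    using AE_convergent_if_nn_integral_sq_diff_le[of "\<lambda>k. u (r k)", OF _ diff] by auto
  have "(\<integral>\<^sup>+x. (cmod (u (r k) x - f x))\<^sup>2 \<partial>M) \<le> c (r k)" for k
    by (rule nn_integral_sq_diff_limit_le[where v = "\<lambda>k. u (r k)", OF _ lim cauchy cr0]) measurable
  then have "(\<lambda>k. \<integral>\<^sup>+x. (cmod (u (r k) x - f x))\<^sup>2 \<partial>M) \<longlonglongrightarrow> 0"
    by (intro tendsto_sandwich[OF _ _ tendsto_const cr0] always_eventually) auto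
  then show ?thesis using that r f by blast
qed

section \<open>The cut-off argument\<close>

lemma smooth_on_Un_open:
  assumes "open S" "open T" "smooth_on S f" "smooth_on T f"
  shows "smooth_on (S \<union> T) f"
  using assms continuous_on_open_Un[OF assms(1,2)] unfolding smooth_on_def by blast

lemma smooth_on_if_eq_0_open:
  assumes "open T" "\<And>x. x \<in> T \<Longrightarrow> f x = 0"
  shows "smooth_on T f"
  unfolding smooth_on_def
proof (intro allI conjI ballI)
  fix ds
  have dpar0: "dpar ds f x = 0" if "x \<in> T" for x by (rule dpar_eq_0_open[OF assms(1) that assms(2)])
  then show "continuous_on T (dpar ds f)" by (intro continuous_on_eq[OF continuous_on_const[of T 0]]) auto
  fix i x assume "x \<in> T"
  have "open ((\<lambda>t::real. x + t *\<^sub>R coord_dir i) -` T)"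
    by (rule open_vimage[OF assms(1)]) (auto intro!: continuous_intros)
  then have "((\<lambda>t. dpar ds f (x + t *\<^sub>R coord_dir i)) has_vector_derivative 0) (at 0)"
    by (rule has_vector_derivative_transform_within_open[OF has_vector_derivative_const])
       (use \<open>x \<in> T\<close> dpar0 in auto)
  then show "(\<lambda>t. dpar ds f (x + t *\<^sub>R coord_dir i)) differentiable (at 0)"
    by (rule differentiableI_vector)
qed

lemma open_snd_less: "open {x :: real \<times> real. snd x < c}"
  by (rule open_Collect_less) (auto intro: continuous_intros)

lemma smooth_if_smooth_on_E_half:
  assumes "smooth_on E_half f" "0 < c" "\<And>x. snd x < c \<Longrightarrow> f x = 0"
  shows "smooth f"
proof -
  have "open E_half"
    unfolding E_half_def by (rule open_Collect_less) (auto intro: continuous_intros)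
  then have "smooth_on (E_half \<union> {x. snd x < c}) f"
    using smooth_on_Un_open[OF _ open_snd_less assms(1) smooth_on_if_eq_0_open[OF open_snd_less]] assms(3)
    by blast
  moreover have "E_half \<union> {x. snd x < c} = UNIV" using assms(2) unfolding E_half_def by auto
  ultimately show ?thesis by simp
qed

lemma partial_0_eq_0_if_depends_on_snd:
  assumes "\<And>x y. snd x = snd y \<Longrightarrow> f x = f y"
  shows "partial 0 f = (\<lambda>_. 0)"
proof
  fix x :: "real \<times> real"
  have "(\<lambda>t. f (x + t *\<^sub>R coord_dir 0)) = (\<lambda>_. f x)"
    by (intro ext assms) (simp add: coord_dir_def)
  then show "partial 0 f x = 0" unfolding partial_def by simp
qed

lemma dpar_bounded_if_bounded_on_E_half:
  fixes f :: "real \<times> real \<Rightarrow> real"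
  assumes "\<And>x. x \<in> E_half \<Longrightarrow> \<bar>dpar ds f x\<bar> \<le> C" "0 < c" "\<And>x. snd x < c \<Longrightarrow> f x = 0"
  shows "\<bar>dpar ds f x\<bar> \<le> \<bar>C\<bar>"
proof (cases "x \<in> E_half")
  case False
  then have "dpar ds f x = 0"
    using assms(2,3) by (intro dpar_eq_0_open[OF open_snd_less, of x c]) (auto simp: E_half_def)
  then show ?thesis by simp
next
  case True
  then show ?thesis using assms(1) abs_ge_self order_trans by blast
qed

text \<open>With \<open>c > 0\<close>, cut-offs of functions in \<open>C\<^sub>c\<^sup>\<infinity>(\<real>\<^sup>2)\<close> lie in \<open>C\<^sub>c\<^sup>\<infinity>(closure E)\<close>, where \<open>H\<^sup>E\<close>
  acts as \<open>H\<close>.\<close>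

locale magnetic_cutoff =
  fixes V a1 a2 e :: "real \<times> real \<Rightarrow> real" and M B1 B2 c :: real
  assumes smooth_a1: "smooth a1" and smooth_a2: "smooth a2"
    and smooth_V: "smooth V" and V_bound: "\<And>x. \<bar>V x\<bar> \<le> M"
    and smooth_e: "smooth e" and partial_0_e: "partial 0 e = (\<lambda>_. 0)"
    and e_bound: "\<And>x. \<bar>e x\<bar> \<le> 1" and partial_1_e_bound: "\<And>x. \<bar>partial 1 e x\<bar> \<le> B1"
    and partial_1_1_e_bound: "\<And>x. \<bar>partial 1 (partial 1 e) x\<bar> \<le> B2"
    and c_pos: "0 < c" and e_eq_0: "\<And>x. snd x < c \<Longrightarrow> e x = 0"
begin

abbreviation cutoff :: "(real \<times> real \<Rightarrow> complex) \<Rightarrow> real \<times> real \<Rightarrow> complex" where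
  "cutoff f \<equiv> \<lambda>x. of_real (e x) * f x"

lemma smooth_cutoff: "smooth f \<Longrightarrow> smooth (cutoff f)"
  by (intro smooth_mult smooth_of_real smooth_e)

lemma Cc_plane_cutoff: "Cc_plane \<phi> \<Longrightarrow> Cc_plane (cutoff \<phi>)"
  unfolding Cc_plane_def using smooth_cutoff by auto

lemma Cc_Ebar_cutoff:
  assumes "Cc_plane \<phi>"
  shows "Cc_Ebar (cutoff \<phi>)"
proof -
  have smooth: "smooth (cutoff \<phi>)" using assms smooth_cutoff unfolding Cc_plane_def by blast
  obtain R where R: "\<And>x. norm x > R \<Longrightarrow> \<phi> x = 0" using assms unfolding Cc_plane_def by blast
  have below: "cutoff \<phi> x = 0" if "snd x \<le> 0" for x using e_eq_0[of x] c_pos that by simp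
  show ?thesis
    unfolding Cc_Ebar_def
  proof (intro conjI allI impI)
    show "cutoff \<phi> x = 0" if "x \<notin> E_half" for x using below that by (simp add: E_half_def)
    show "smooth_on E_half (cutoff \<phi>)"
      using smooth unfolding smooth_on_def by (auto intro: continuous_on_subset)
    show "\<exists>g. continuous_on (closure E_half) g \<and> (\<forall>x\<in>E_half. g x = dpar ds (cutoff \<phi>) x)" for ds
      using smooth_imp_continuous[OF smooth_dpar[OF smooth]] by (auto intro: continuous_on_subset)
    show "\<exists>a>0. \<forall>x. \<not> (- a < fst x \<and> fst x < a \<and> 0 < snd x \<and> snd x < a) \<longrightarrow> cutoff \<phi> x = 0"
    proof (intro exI[of _ "\<bar>R\<bar> + 1"] conjI allI impI)
      fix x :: "real \<times> real"
      assume "\<not> (- (\<bar>R\<bar> + 1) < fst x \<and> fst x < \<bar>R\<bar> + 1 \<and> 0 < snd x \<and> snd x < \<bar>R\<bar> + 1)"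
      moreover have "\<bar>fst x\<bar> \<le> norm x" "\<bar>snd x\<bar> \<le> norm x"
        using norm_fst_le[of "fst x" "snd x"] norm_snd_le[of "snd x" "fst x"] by simp_all
      ultimately have "snd x \<le> 0 \<or> norm x > R" by linarith
      then show "cutoff \<phi> x = 0" using below[of x] R[of x] by auto
    qed simp
  qed
qed

lemma HopE_cutoff: "HopE V a1 a2 b (cutoff f) = Hop V a1 a2 b (cutoff f)"
proof
  fix x
  show "HopE V a1 a2 b (cutoff f) x = Hop V a1 a2 b (cutoff f) x"
  proof (cases "x \<in> E_half")
    case False
    then have "Hop V a1 a2 b (cutoff f) x = 0"
      using c_pos e_eq_0 by (intro Hop_eq_0_open[OF open_snd_less, of x c]) (auto simp: E_half_def)
    then show ?thesis using False by (simp add: HopE_def)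
  qed (simp add: HopE_def)
qed

abbreviation graph_const :: ennreal where
  "graph_const \<equiv> ennreal (3 + 12 * B1\<^sup>2 * (1 + M) + 3 * B2\<^sup>2)"

lemma nn_integral_Hop_cutoff_diff_le:
  assumes f: "smooth f1" "smooth f2" "has_compact_support f1" "has_compact_support f2"
    and [measurable]: "g \<in> borel_measurable lborel" "\<psi> \<in> borel_measurable lborel"
  shows "(\<integral>\<^sup>+x. (cmod (Hop V a1 a2 b (cutoff f1) x - Hop V a1 a2 b (cutoff f2) x))\<^sup>2 \<partial>lborel) \<le>
    graph_const * ((2 * (\<integral>\<^sup>+x. (cmod (Hop V a1 a2 b f1 x - g x))\<^sup>2 \<partial>lborel)
                      + 2 * (\<integral>\<^sup>+x. (cmod (Hop V a1 a2 b f2 x - g x))\<^sup>2 \<partial>lborel))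
                   + (2 * (\<integral>\<^sup>+x. (cmod (f1 x - \<psi> x))\<^sup>2 \<partial>lborel)
                      + 2 * (\<integral>\<^sup>+x. (cmod (f2 x - \<psi> x))\<^sup>2 \<partial>lborel)))"
proof -
  let ?H = "Hop V a1 a2 b" and ?d = "\<lambda>x. f1 x - f2 x"
  note smooth = smooth_a1 smooth_a2
  have [measurable]: "f1 \<in> borel_measurable lborel" "f2 \<in> borel_measurable lborel"
    "?H f1 \<in> borel_measurable lborel" "?H f2 \<in> borel_measurable lborel"
    by (intro smooth_imp_borel_measurable smooth_Hop smooth_V smooth f(1,2))+
  have "cutoff ?d = (\<lambda>x. cutoff f1 x - cutoff f2 x)" by (simp add: fun_eq_iff right_diff_distrib)
  then have "?H (cutoff f1) x - ?H (cutoff f2) x = ?H (cutoff ?d) x" for x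
    using Hop_diff[OF smooth smooth_cutoff smooth_cutoff, OF f(1) f(2), of V b] by simp
  then have "(\<integral>\<^sup>+x. (cmod (?H (cutoff f1) x - ?H (cutoff f2) x))\<^sup>2 \<partial>lborel) \<le>
      graph_const * ((\<integral>\<^sup>+x. (cmod (?H ?d x))\<^sup>2 \<partial>lborel) + (\<integral>\<^sup>+x. (cmod (?d x))\<^sup>2 \<partial>lborel))"
    using nn_integral_Hop_of_real_mult_le[OF smooth smooth_V V_bound smooth_e partial_0_e e_bound
        partial_1_e_bound partial_1_1_e_bound smooth_diff[OF f(1,2)] has_compact_support_diff[OF f(3,4)],
        of b]
    by simp
  also have "\<dots> \<le> graph_const * ((2 * (\<integral>\<^sup>+x. (cmod (?H f1 x - g x))\<^sup>2 \<partial>lborel)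
                      + 2 * (\<integral>\<^sup>+x. (cmod (?H f2 x - g x))\<^sup>2 \<partial>lborel))
                   + (2 * (\<integral>\<^sup>+x. (cmod (f1 x - \<psi> x))\<^sup>2 \<partial>lborel)
                      + 2 * (\<integral>\<^sup>+x. (cmod (f2 x - \<psi> x))\<^sup>2 \<partial>lborel)))"
    unfolding Hop_diff[OF smooth f(1,2)]
    by (intro mult_left_mono add_mono nn_integral_sq_diff_le) measurable
  finally show ?thesis .
qed

lemma Hop_cutoff_subseq_convergent:
  assumes \<phi>: "\<And>n. Cc_plane (\<phi> n)" and conv: "L2_conv \<phi> \<psi>" "L2_conv (\<lambda>n. Hop V a1 a2 b (\<phi> n)) g"
    and [measurable]: "g \<in> borel_measurable lborel" "\<psi> \<in> borel_measurable lborel"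
  obtains r F where "strict_mono r" "F \<in> borel_measurable lborel"
    "L2_conv (\<lambda>k. Hop V a1 a2 b (cutoff (\<phi> (r k)))) F"
proof -
  define cH where "cH n = (\<integral>\<^sup>+x. (cmod (Hop V a1 a2 b (\<phi> n) x - g x))\<^sup>2 \<partial>lborel)" for n
  define cP where "cP n = (\<integral>\<^sup>+x. (cmod (\<phi> n x - \<psi> x))\<^sup>2 \<partial>lborel)" for n
  have "(\<lambda>n. graph_const * (2 * cH n + 2 * cP n)) \<longlonglongrightarrow> graph_const * (2 * 0 + 2 * 0)"
    using conv unfolding L2_conv_def cH_def cP_def
    by (intro ennreal_tendsto_cmult tendsto_add tendsto_mult tendsto_const) auto
  then have lim: "(\<lambda>n. graph_const * (2 * cH n + 2 * cP n)) \<longlonglongrightarrow> 0" by simp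
  have cauchy: "(\<integral>\<^sup>+x. (cmod (Hop V a1 a2 b (cutoff (\<phi> n)) x - Hop V a1 a2 b (cutoff (\<phi> m)) x))\<^sup>2 \<partial>lborel)
      \<le> graph_const * (2 * cH n + 2 * cP n) + graph_const * (2 * cH m + 2 * cP m)" for m n
    using nn_integral_Hop_cutoff_diff_le[of "\<phi> n" "\<phi> m"] \<phi> unfolding Cc_plane_def cH_def cP_def
    by (simp add: has_compact_support_def algebra_simps)
  have "Hop V a1 a2 b (cutoff (\<phi> n)) \<in> borel_measurable lborel" for n
    using \<phi> unfolding Cc_plane_def
    by (intro smooth_imp_borel_measurable smooth_Hop smooth_V smooth_a1 smooth_a2 smooth_cutoff) blast
  from L2_Cauchy_subseq_convergent[OF this lim cauchy] show ?thesis
    using that unfolding L2_conv_def by blast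
qed

lemma graphs_cutoff:
  assumes "Hb_graph V a1 a2 b \<psi> g"
  shows "\<exists>F. HbE_graph V a1 a2 b (cutoff \<psi>) F \<and> Hb_graph V a1 a2 b (cutoff \<psi>) F"
proof -
  obtain \<phi> where sq_int: "L2 \<psi>" "L2 g" and \<phi>: "\<And>n. Cc_plane (\<phi> n)"
    and conv: "L2_conv \<phi> \<psi>" "L2_conv (\<lambda>n. Hop V a1 a2 b (\<phi> n)) g"
    using assms unfolding Hb_graph_def closure_graph_def by blast
  then obtain r F where r: "strict_mono r" and F: "F \<in> borel_measurable lborel"
    and convH: "L2_conv (\<lambda>k. Hop V a1 a2 b (cutoff (\<phi> (r k)))) F"
    using Hop_cutoff_subseq_convergent[OF \<phi> conv] sq_int unfolding L2_def by blast
  have "L2_conv (\<lambda>k. \<phi> (r k)) \<psi>"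
    using LIMSEQ_subseq_LIMSEQ[OF conv(1)[unfolded L2_conv_def] r] by (simp add: L2_conv_def comp_def)
  then have convP: "L2_conv (\<lambda>k. cutoff (\<phi> (r k))) (cutoff \<psi>)"
    using L2_conv_of_real_mult e_bound by blast
  have "L2 (Hop V a1 a2 b (cutoff (\<phi> k)))" for k
    using \<phi>[of k] unfolding Cc_plane_def
    by (intro L2_if_continuous_compact_support smooth_imp_continuous smooth_Hop smooth_V smooth_a1
        smooth_a2 smooth_cutoff has_compact_support_Hop has_compact_support_mult_left)
       (auto simp: has_compact_support_def)
  then have "L2 F" using F convH by (rule L2_if_L2_conv)
  moreover have "L2 (cutoff \<psi>)"
    using sq_int(1) smooth_imp_borel_measurable[OF smooth_e] e_bound by (rule L2_of_real_mult)
  moreover have "\<forall>k. Cc_Ebar (cutoff (\<phi> (r k)))" "\<forall>k. Cc_plane (cutoff (\<phi> (r k)))"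
    using Cc_Ebar_cutoff Cc_plane_cutoff \<phi> by blast+
  moreover have "L2_conv (\<lambda>k. HopE V a1 a2 b (cutoff (\<phi> (r k)))) F"
    using convH by (simp add: HopE_cutoff)
  ultimately show ?thesis
    unfolding HbE_graph_def Hb_graph_def closure_graph_def
    using convP convH by (intro exI[of _ F]) (auto intro!: exI[of _ "\<lambda>k. cutoff (\<phi> (r k))"])
qed

end

lemma BC_inf_imp_bounded: "BC_inf f \<Longrightarrow> \<exists>M. \<forall>x. \<bar>f x\<bar> \<le> M"
  unfolding BC_inf_def bounded_iff by (metis dpar.simps(1) rangeI real_norm_def)

lemma magnetic_cutoff_if_supported_above:
  fixes e :: "real \<times> real \<Rightarrow> real"
  assumes "BC_inf V" "BC_inf a1" "BC_inf a2"
    and zero: "\<And>x. x \<notin> E_half \<Longrightarrow> e x = 0" and x2: "\<exists>h. \<forall>x\<in>E_half. e x = h (snd x)"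
    and smooth: "smooth_on E_half e" and range: "\<And>x. x \<in> E_half \<Longrightarrow> e x \<in> {0..1}"
    and supp: "closure {x \<in> E_half. e x \<noteq> 0} \<inter> E_half \<subseteq> {x. snd x > c}" and c: "0 < c"
    and d1: "\<exists>C. \<forall>x\<in>E_half. \<bar>partial 1 e x\<bar> \<le> C"
    and d2: "\<exists>C. \<forall>x\<in>E_half. \<bar>partial 1 (partial 1 e) x\<bar> \<le> C"
  shows "\<exists>M B1 B2. magnetic_cutoff V a1 a2 e M B1 B2 c"
proof -
  have vanish: "e x = 0" if "snd x < c" for x
    using zero[of x] supp closure_subset[of "{x \<in> E_half. e x \<noteq> 0}"] that by fastforce
  obtain M where "\<And>x. \<bar>V x\<bar> \<le> M" using BC_inf_imp_bounded[OF assms(1)] by blast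
  moreover obtain C1 C2 where "\<forall>x\<in>E_half. \<bar>partial 1 e x\<bar> \<le> C1"
    "\<forall>x\<in>E_half. \<bar>partial 1 (partial 1 e) x\<bar> \<le> C2"
    using d1 d2 by blast
  then have "\<bar>partial 1 e x\<bar> \<le> \<bar>C1\<bar>" "\<bar>partial 1 (partial 1 e) x\<bar> \<le> \<bar>C2\<bar>" for x
    using dpar_bounded_if_bounded_on_E_half[of "[1]", OF _ c vanish]
      dpar_bounded_if_bounded_on_E_half[of "[1, 1]", OF _ c vanish] by simp_all
  moreover have "partial 0 e = (\<lambda>_. 0)"
  proof (rule partial_0_eq_0_if_depends_on_snd)
    obtain h where h: "\<forall>x\<in>E_half. e x = h (snd x)" using x2 by blast
    show "e x = e y" if "snd x = snd y" for x y
      using that zero[of x] zero[of y] h[rule_format, of x] h[rule_format, of y]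
      by (cases "x \<in> E_half") (auto simp: E_half_def)
  qed
  moreover have "\<bar>e x\<bar> \<le> 1" for x using range[of x] zero[of x] by (cases "x \<in> E_half") auto
  moreover have "smooth e" by (rule smooth_if_smooth_on_E_half[OF smooth c vanish])
  ultimately show ?thesis
    using assms(1-3) c vanish unfolding magnetic_cutoff_def BC_inf_def by blast
qed

theorem proposition4p2:
  fixes V a1 a2 :: "real \<times> real \<Rightarrow> real"
    and b :: real
    and \<eta> :: "real \<Rightarrow> real \<times> real \<Rightarrow> real"
  assumes V: "BC_inf V"
    and A1: "BC_inf a1" and A2: "BC_inf a2"
    and eta_zero: "\<And>l x. l > 2 \<Longrightarrow> x \<notin> E_half \<Longrightarrow> \<eta> l x = 0"
    and eta_x2: "\<And>l. l > 2 \<Longrightarrow> \<exists>h. \<forall>x\<in>E_half. \<eta> l x = h (snd x)"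
    and eta_smooth: "\<And>l. l > 2 \<Longrightarrow> smooth_on E_half (\<eta> l)"
    and eta_range: "\<And>l x. l > 2 \<Longrightarrow> x \<in> E_half \<Longrightarrow> \<eta> l x \<in> {0..1}"
    and eta_supp: "\<And>l. l > 2 \<Longrightarrow>
        closure {x \<in> E_half. \<eta> l x \<noteq> 0} \<inter> E_half \<subseteq> {x. snd x > sqrt l / 4}"
    and eta_deriv: "\<And>n. n \<ge> 1 \<Longrightarrow> \<exists>C. \<forall>l > 2. \<forall>x\<in>E_half.
        \<bar>dpar (replicate n 1) (\<eta> l) x\<bar> \<le> C * l powr (- real n / 2)"
  shows "\<forall>l > 2. \<forall>\<psi>. (\<exists>g. Hb_graph V a1 a2 b \<psi> g) \<longrightarrow>
           (\<exists>f. HbE_graph V a1 a2 b (\<lambda>x. complex_of_real (\<eta> l x) * \<psi> x) f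
              \<and> Hb_graph V a1 a2 b (\<lambda>x. complex_of_real (\<eta> l x) * \<psi> x) f)"
proof (intro allI impI)
  fix l :: real and \<psi>
  assume l: "l > 2" and "\<exists>g. Hb_graph V a1 a2 b \<psi> g"
  then obtain g where g: "Hb_graph V a1 a2 b \<psi> g" by blast
  \<comment> \<open>only boundedness of \<open>\<partial>\<^sub>2 \<eta>\<close> and \<open>\<partial>\<^sub>2\<^sup>2 \<eta>\<close> is needed, not their decay in \<open>l\<close>\<close>
  have "\<exists>C. \<forall>x\<in>E_half. \<bar>dpar (replicate n 1) (\<eta> l) x\<bar> \<le> C" if "n \<ge> 1" for n
    using eta_deriv[OF that] l by blast
  from this[of 1] this[of 2] obtain M B1 B2 where "magnetic_cutoff V a1 a2 (\<eta> l) M B1 B2 (sqrt l / 4)"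
    using magnetic_cutoff_if_supported_above[OF V A1 A2 eta_zero eta_x2 eta_smooth eta_range eta_supp] l
    by (simp add: numeral_2_eq_2) blast
  then show "\<exists>f. HbE_graph V a1 a2 b (\<lambda>x. complex_of_real (\<eta> l x) * \<psi> x) f
      \<and> Hb_graph V a1 a2 b (\<lambda>x. complex_of_real (\<eta> l x) * \<psi> x) f"
    using magnetic_cutoff.graphs_cutoff g by blast
qed
end
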